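(* Let $\mathcal A_+=\{a_1,\dots,a_k\},\ \mathcal A_-=\{b_1,\dots,b_m\}\subseteq\mathbb Z^n$ be disjoint nonempty finite sets with $\mathcal A=\mathcal A_+\cup\mathcal A_-$ full dimensional and $(\mathcal A_+,\mathcal A_-)$ nonseparable. Let $F$ be its critical system, $h:\mathcal A\to\mathbb Z$ a height function lifting $\mathcal A_-$, and $f\in\mathcal S(\mathcal A_+,\mathcal A_-)$ with nonsigned coefficients $c\in\mathbb R^{\mathcal A}_{>0}$. Let $\lambda_1,\dots,\lambda_k>0$ with $\sum_i\lambda_i=1$ and $\sum_i\lambda_ia_i=b_1$, and define $\hat c\in\mathbb R^{\mathcal A}_{\ge0}$ by $\hat c_{a_i}=\lambda_i$, $\hat c_{b_1}=1$, $\hat c_{b_j}=0$ for $j\ge2$. Let $H(s,(t,x))=F((sc+(1-s)\hat c)\star t^h,x)$ for $s\in[0,1]$. Then $H(0,(1,\mathbb 1))=0$, and there is a unique continuous path $s\mapsto(t(s),x(s))\in\mathbb R^{n+1}_{>0}$, $s\in[0,1]$, with $(t(0),x(0))=(1,\mathbb 1)$ and $H(s,(t(s),x(s)))=0$ for all $s$; its endpoint $(t_*,x_* )=(t(1),x(1))$ satisfies $S=\{t_*\}$, where $S=\{t\in\mathbb R_{>0}:F(c\star t^h,x)=0\text{ for some }x\in\mathbb R^n_{>0}\}$.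
   Context: For a coefficient vector $c\in\mathbb R^{\mathcal A}$, $f_c(x)=\sum_{a\in\mathcal A_+}c_ax^a-\sum_{b\in\mathcal A_-}c_bx^b$; $\mathcal S(\mathcal A_+,\mathcal A_-)$ is the set of these with $c\in\mathbb R^{\mathcal A}_{>0}$ (nonsigned coefficients). The critical system is $F(c,x)=(f_c(x),x_1\partial_{x_1}f_c(x),\dots,x_n\partial_{x_n}f_c(x))$. Full dimensional: $\dim\operatorname{conv}(\mathcal A)=n$. $\mathcal F(\mathcal A_+)$ is the common refinement of all regular polyhedral subdivisions of $\mathcal A_+$, $\mathcal F_n(\mathcal A_+)$ its $n$-cells; $(\mathcal A_+,\mathcal A_-)$ is nonseparable if $\mathcal A_-\subseteq\operatorname{relint}\operatorname{conv}(\mathcal A_+)$ and some $D\in\mathcal F_n(\mathcal A_+)$ contains $\mathcal A_-$. A height function $h$ lifts $\mathcal A_-$ if $h(a)>0$ for $a\in\mathcal A_-$ and $h(a)=0$ for $a\in\mathcal A_+$; $c\star t^h=(c_at^{h(a)})_a$; $\mathbb 1=(1,\dots,1)$. *)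

theory Defs
  imports "HOL-Analysis.Analysis"
begin

text \<open>Exponent vectors live in int^'n (so n = CARD('n)); points x live in real^'n.\<close>

definition rv :: "int ^ 'n \<Rightarrow> real ^ 'n" where
  "rv a = (\<chi> i. real_of_int (a $ i))"

definition monom_val :: "real ^ 'n \<Rightarrow> int ^ 'n \<Rightarrow> real" where
  "monom_val x a = (\<Prod>j\<in>UNIV. (x $ j) powi (a $ j))"

definition fpoly :: "(int ^ 'n) set \<Rightarrow> (int ^ 'n) set \<Rightarrow> (int ^ 'n \<Rightarrow> real) \<Rightarrow> real ^ 'n \<Rightarrow> real" where
  "fpoly Ap Am c x = (\<Sum>a\<in>Ap. c a * monom_val x a) - (\<Sum>b\<in>Am. c b * monom_val x b)"

definition xi_dfpoly :: "(int ^ 'n) set \<Rightarrow> (int ^ 'n) set \<Rightarrow> (int ^ 'n \<Rightarrow> real) \<Rightarrow> real ^ 'n \<Rightarrow> 'n \<Rightarrow> real" where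
  "xi_dfpoly Ap Am c x i =
     x $ i * deriv (\<lambda>y. fpoly Ap Am c (\<chi> j. if j = i then y else x $ j)) (x $ i)"

definition crit_sys :: "(int ^ 'n) set \<Rightarrow> (int ^ 'n) set \<Rightarrow> (int ^ 'n \<Rightarrow> real) \<Rightarrow> real ^ 'n \<Rightarrow> real \<times> (real ^ 'n)" where
  "crit_sys Ap Am c x = (fpoly Ap Am c x, \<chi> i. xi_dfpoly Ap Am c x i)"

definition star_pow :: "(int ^ 'n \<Rightarrow> real) \<Rightarrow> real \<Rightarrow> (int ^ 'n \<Rightarrow> int) \<Rightarrow> int ^ 'n \<Rightarrow> real" where
  "star_pow c t h = (\<lambda>a. c a * t powi h a)"

text \<open>Cells of the regular polyhedral subdivision of A+ induced by heights w:
  conv(sigma) where sigma is the set of points on a lower face of the lifted configuration.\<close>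
definition regular_cells :: "(int ^ 'n) set \<Rightarrow> (int ^ 'n \<Rightarrow> real) \<Rightarrow> (real ^ 'n) set set" where
  "regular_cells Ap w =
     {convex hull (rv ` \<sigma>) | \<sigma>. \<sigma> \<subseteq> Ap \<and> \<sigma> \<noteq> {} \<and>
        (\<exists>u u0. (\<forall>a\<in>Ap. u \<bullet> rv a + u0 \<le> w a) \<and> \<sigma> = {a\<in>Ap. u \<bullet> rv a + u0 = w a})}"

definition common_refinement :: "(int ^ 'n) set \<Rightarrow> (real ^ 'n) set set" where
  "common_refinement Ap =
     {D. D \<noteq> {} \<and> (\<exists>C. (\<forall>w. C w \<in> regular_cells Ap w) \<and> D = (\<Inter>w. C w))}"

definition common_refinement_ncells :: "(int ^ 'n) set \<Rightarrow> (real ^ 'n) set set" where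
  "common_refinement_ncells Ap = {D \<in> common_refinement Ap. aff_dim D = int CARD('n)}"

definition nonseparable :: "(int ^ 'n) set \<Rightarrow> (int ^ 'n) set \<Rightarrow> bool" where
  "nonseparable Ap Am \<longleftrightarrow>
     rv ` Am \<subseteq> rel_interior (convex hull (rv ` Ap)) \<and>
     (\<exists>D\<in>common_refinement_ncells Ap. rv ` Am \<subseteq> D)"

definition full_dimensional :: "(int ^ 'n) set \<Rightarrow> bool" where
  "full_dimensional A \<longleftrightarrow> aff_dim (convex hull (rv ` A)) = int CARD('n)"

definition lifts :: "(int ^ 'n) set \<Rightarrow> (int ^ 'n) set \<Rightarrow> (int ^ 'n \<Rightarrow> int) \<Rightarrow> bool" where
  "lifts Ap Am h \<longleftrightarrow> (\<forall>a\<in>Am. h a > 0) \<and> (\<forall>a\<in>Ap. h a = 0)"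

end

theory Submission
  imports Defs
begin

text \<open>
  In logarithmic coordinates \<open>x = exp y\<close>, a positive critical point \<open>(t, y)\<close> of
  \<open>F (C \<star> t\<^sup>h, -)\<close> says exactly that the weights \<open>C a exp \<langle>a, y\<rangle>\<close> on \<open>A\<^sub>+\<close> and
  \<open>C b t\<^bsup>h b\<^esup> exp \<langle>b, y\<rangle>\<close> on \<open>A\<^sub>-\<close> have equal mass and equal barycenter.
  Nonseparability gives, for every \<open>y\<close>, an affine function below \<open>exp \<langle>-, y\<rangle>\<close> on \<open>A\<^sub>+\<close>
  and above it on \<open>A\<^sub>-\<close> (the lower face, for the heights \<open>exp \<langle>a, y\<rangle>\<close>, of the cell
  containing \<open>A\<^sub>-\<close>). Integrated against balanced weights, this makes every critical point a
  global minimum, of value \<open>0\<close>, of \<open>f\<close> at its level \<open>t\<close>; strict convexity of \<open>exp\<close> and full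
  dimensionality make it the only zero there, and since \<open>f\<close> decreases strictly in \<open>t\<close> there is
  at most one critical point. Conversely, at the least \<open>t\<close> where \<open>f\<close> takes a nonpositive value
  its minimum is \<open>0\<close>, hence attained at a critical point. Bounds that are uniform along the
  homotopy \<open>s c + (1 - s) c_hat\<close> put all critical points into one compact set, so the graph of
  the solution path is closed and the path is continuous.
\<close>

section \<open>Logarithmic coordinates\<close>

definition vexp :: "real^'n \<Rightarrow> real^'n" where
  "vexp y = (\<chi> j. exp (y $ j))"

definition vln :: "real^'n \<Rightarrow> real^'n" where
  "vln x = (\<chi> j. ln (x $ j))"

lemma vexp_vln: "(\<And>j. 0 < x $ j) \<Longrightarrow> vexp (vln x) = x"
  by (simp add: vexp_def vln_def vec_eq_iff)

lemma vexp_pos [simp]: "0 < vexp y $ j"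
  by (simp add: vexp_def)

lemma vexp_0 [simp]: "vexp 0 = (\<chi> i. 1)"
  by (simp add: vexp_def vec_eq_iff)

lemma continuous_on_vexp: "continuous_on S vexp"
  unfolding vexp_def by (intro continuous_intros)

lemma monom_val_vexp: "monom_val (vexp y) a = exp (rv a \<bullet> y)"
  by (simp add: monom_val_def vexp_def rv_def inner_vec_def exp_power_int exp_sum)

section \<open>The critical system\<close>

lemma monom_val_upd:
  "monom_val (\<chi> j. if j = i then z else x $ j) a = z powi (a $ i) * (\<Prod>j\<in>UNIV - {i}. x $ j powi (a $ j))"
  unfolding monom_val_def by (subst prod.remove[of UNIV i]) (auto intro!: prod.cong)

lemma monom_val_has_real_derivative:
  assumes "x $ i \<noteq> 0"
  shows "((\<lambda>z. monom_val (\<chi> j. if j = i then z else x $ j) a) has_real_derivative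
           rv a $ i * monom_val x a / x $ i) (at (x $ i))"
proof -
  let ?K = "\<Prod>j\<in>UNIV - {i}. x $ j powi (a $ j)"
  have "(\<chi> j. if j = i then x $ i else x $ j) = x"
    by (simp add: vec_eq_iff)
  then have "monom_val x a = x $ i powi (a $ i) * ?K"
    by (metis monom_val_upd)
  then have "of_int (a $ i) * x $ i powi (a $ i - 1) * ?K = rv a $ i * monom_val x a / x $ i"
    using assms by (simp add: rv_def power_int_diff)
  moreover have "((\<lambda>z. z powi (a $ i) * ?K) has_real_derivative
      of_int (a $ i) * x $ i powi (a $ i - 1) * ?K) (at (x $ i))"
    using assms by (auto intro!: derivative_eq_intros)
  ultimately show ?thesis
    by (simp add: monom_val_upd)
qed

lemma fpoly_has_real_derivative:
  assumes "x $ i \<noteq> 0"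
  shows "((\<lambda>z. fpoly Ap Am c (\<chi> j. if j = i then z else x $ j)) has_real_derivative
     ((\<Sum>a\<in>Ap. c a * monom_val x a * rv a $ i) - (\<Sum>b\<in>Am. c b * monom_val x b * rv b $ i)) / x $ i)
     (at (x $ i))"
proof -
  have "((\<lambda>z. fpoly Ap Am c (\<chi> j. if j = i then z else x $ j)) has_real_derivative
      (\<Sum>a\<in>Ap. c a * (rv a $ i * monom_val x a / x $ i)) - (\<Sum>b\<in>Am. c b * (rv b $ i * monom_val x b / x $ i)))
      (at (x $ i))"
    unfolding fpoly_def by (intro DERIV_diff DERIV_sum DERIV_cmult monom_val_has_real_derivative assms)
  then show ?thesis
    by (simp add: sum_divide_distrib diff_divide_distrib mult_ac)
qed

lemma xi_dfpoly_eq: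
  assumes "x $ i \<noteq> 0"
  shows "xi_dfpoly Ap Am c x i =
    (\<Sum>a\<in>Ap. c a * monom_val x a * rv a $ i) - (\<Sum>b\<in>Am. c b * monom_val x b * rv b $ i)"
  using DERIV_imp_deriv[OF fpoly_has_real_derivative[OF assms]] assms
  by (simp add: xi_dfpoly_def)

lemma crit_sys_eq_0_iff:
  assumes "\<And>i. x $ i \<noteq> 0"
  shows "crit_sys Ap Am c x = 0 \<longleftrightarrow> fpoly Ap Am c x = 0 \<and>
    (\<Sum>a\<in>Ap. (c a * monom_val x a) *\<^sub>R rv a) = (\<Sum>b\<in>Am. (c b * monom_val x b) *\<^sub>R rv b)"
  using assms by (simp add: crit_sys_def zero_prod_def vec_eq_iff xi_dfpoly_eq)

lemma crit_sys_eq_0_at_min: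
  assumes nonneg: "\<And>z. (\<And>j. 0 < z $ j) \<Longrightarrow> 0 \<le> fpoly Ap Am c z"
    and pos: "\<And>j. 0 < x $ j" and zero: "fpoly Ap Am c x = 0"
  shows "crit_sys Ap Am c x = 0"
proof -
  have "xi_dfpoly Ap Am c x i = 0" for i
  proof -
    define \<phi> where "\<phi> = (\<lambda>z. fpoly Ap Am c (\<chi> j. if j = i then z else x $ j))"
    obtain l where l: "(\<phi> has_real_derivative l) (at (x $ i))"
      using fpoly_has_real_derivative[of x i] pos[of i] unfolding \<phi>_def by fastforce
    have "(\<chi> j. if j = i then x $ i else x $ j) = x"
      by (simp add: vec_eq_iff)
    then have "\<phi> (x $ i) \<le> \<phi> z" if "\<bar>x $ i - z\<bar> < x $ i" for z
      using that pos by (auto simp: \<phi>_def zero intro!: nonneg)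
    then have "l = 0"
      using DERIV_local_min[OF l pos[of i]] by blast
    then show ?thesis
      using DERIV_imp_deriv[OF l] by (simp add: xi_dfpoly_def \<phi>_def)
  qed
  then show ?thesis
    using zero by (simp add: crit_sys_def zero_prod_def vec_eq_iff)
qed

section \<open>Convexity of the exponential\<close>

lemma exp_tangent_less:
  assumes "v \<noteq> m"
  shows "exp m * (1 + v - m) < exp (v :: real)"
proof -
  have "1 + (v - m) < exp (v - m)"
    using exp_minus_greater[of "m - v"] assms by simp
  then have "exp m * (1 + (v - m)) < exp m * exp (v - m)"
    by simp
  then show ?thesis
    by (simp add: add_diff_eq flip: exp_add)
qed

lemma exp_sum_eq_imp_constant:
  fixes w z :: "'a \<Rightarrow> real"
  assumes "finite A" and w_pos: "\<And>a. a \<in> A \<Longrightarrow> 0 < w a" and "sum w A = 1"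
    and Jensen_eq: "(\<Sum>a\<in>A. w a * exp (z a)) = exp (\<Sum>a\<in>A. w a * z a)"
    and "a \<in> A"
  shows "z a = (\<Sum>a\<in>A. w a * z a)"
proof (rule ccontr)
  define m where "m = (\<Sum>a\<in>A. w a * z a)"
  assume "z a \<noteq> m"
  have "(\<Sum>a\<in>A. w a * (exp m * (1 + z a - m))) < (\<Sum>a\<in>A. w a * exp (z a))"
  proof (rule sum_strict_mono_ex1[OF \<open>finite A\<close>])
    have "exp m * (1 + z b - m) \<le> exp (z b)" for b
      using exp_tangent_less[of "z b" m] by (cases "z b = m") auto
    then show "\<forall>b\<in>A. w b * (exp m * (1 + z b - m)) \<le> w b * exp (z b)"
      using w_pos by (simp add: mult_left_mono less_imp_le)
    have "w a * (exp m * (1 + z a - m)) < w a * exp (z a)"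
      using w_pos[OF \<open>a \<in> A\<close>] exp_tangent_less[OF \<open>z a \<noteq> m\<close>] by simp
    then show "\<exists>b\<in>A. w b * (exp m * (1 + z b - m)) < w b * exp (z b)"
      using \<open>a \<in> A\<close> by blast
  qed
  also have "\<dots> = exp m"
    using Jensen_eq by (simp add: m_def)
  also have "exp m = (\<Sum>a\<in>A. w a * (exp m * (1 + z a - m)))"
  proof -
    have "(\<Sum>a\<in>A. w a * (exp m * (1 + z a - m))) =
        exp m * (sum w A + (\<Sum>a\<in>A. w a * z a) - m * sum w A)"
      by (simp add: algebra_simps sum.distrib sum_subtractf sum_distrib_left)
    with \<open>sum w A = 1\<close> show ?thesis
      by (simp add: m_def)
  qed
  finally show False
    by simp
qed

lemma exp_inner_le_affine_on_convex_hull: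
  fixes y u :: "'a::real_inner"
  assumes "z \<in> convex hull S" and "\<And>v. v \<in> S \<Longrightarrow> exp (v \<bullet> y) \<le> u \<bullet> v + u0"
  shows "exp (z \<bullet> y) \<le> u \<bullet> z + u0"
proof -
  have "convex_on UNIV (\<lambda>z. exp (z \<bullet> y) - (u \<bullet> z + u0))"
  proof (rule convex_onI)
    fix t :: real and v w :: 'a
    assume "0 < t" "t < 1"
    then have "exp ((1 - t) * (v \<bullet> y) + t * (w \<bullet> y)) \<le> (1 - t) * exp (v \<bullet> y) + t * exp (w \<bullet> y)"
      using convex_onD[OF exp_convex, of t "v \<bullet> y" "w \<bullet> y"] by simp
    then show "exp (((1 - t) *\<^sub>R v + t *\<^sub>R w) \<bullet> y) - (u \<bullet> ((1 - t) *\<^sub>R v + t *\<^sub>R w) + u0)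
        \<le> (1 - t) * (exp (v \<bullet> y) - (u \<bullet> v + u0)) + t * (exp (w \<bullet> y) - (u \<bullet> w + u0))"
      by (simp add: algebra_simps)
  qed simp
  then have "convex_on (convex hull S) (\<lambda>z. exp (z \<bullet> y) - (u \<bullet> z + u0))"
    by (rule convex_on_subset) auto
  then show ?thesis
    using convex_on_convex_hull_bound[of S _ 0] assms by fastforce
qed

lemma exp_inner_le_sum_on_convex_hull:
  fixes v :: "'b \<Rightarrow> 'a::real_inner"
  assumes "finite A" and "z \<in> convex hull (v ` A)"
  shows "exp (z \<bullet> y) \<le> (\<Sum>a\<in>A. exp (v a \<bullet> y))"
proof -
  have "exp (v a \<bullet> y) \<le> (\<Sum>a\<in>A. exp (v a \<bullet> y))" if "a \<in> A" for a
    using assms(1) that by (intro member_le_sum) auto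
  then show ?thesis
    using exp_inner_le_affine_on_convex_hull[OF assms(2), of y 0] by auto
qed

lemma exp_inner_margin_le_sum_on_convex_hull:
  fixes v :: "'b \<Rightarrow> 'a::real_inner"
  assumes "finite A" and "0 \<le> r" and "cball p r \<subseteq> convex hull (v ` A)"
  shows "exp (p \<bullet> y + r * norm y) \<le> (\<Sum>a\<in>A. exp (v a \<bullet> y))"
proof -
  define z where "z = p + (r / norm y) *\<^sub>R y"
  have "z \<in> cball p r"
    using assms(2) by (cases "y = 0") (simp_all add: z_def dist_norm)
  moreover have "z \<bullet> y = p \<bullet> y + r * norm y"
    by (cases "y = 0") (simp_all add: z_def inner_add_left power2_norm_eq_inner[symmetric] power2_eq_square)
  ultimately show ?thesis
    using exp_inner_le_sum_on_convex_hull[OF assms(1)] assms(3) by (metis subsetD)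
qed

lemma inner_constant_on_full_dim_imp_zero:
  fixes y :: "'a::euclidean_space"
  assumes "aff_dim (convex hull S) = DIM('a)" and "\<And>v. v \<in> S \<Longrightarrow> v \<bullet> y = m"
  shows "y = 0"
proof (rule ccontr)
  assume "y \<noteq> 0"
  have "convex hull S \<subseteq> {v. y \<bullet> v = m}"
    using assms(2) convex_hyperplane[of y m] by (intro hull_minimal) (auto simp: inner_commute)
  then have "aff_dim (convex hull S) \<le> aff_dim {v. y \<bullet> v = m}"
    by (rule aff_dim_subset)
  also have "\<dots> < DIM('a)"
    using aff_dim_hyperplane[OF \<open>y \<noteq> 0\<close>, of m] DIM_positive[where 'a='a] by linarith
  finally show False
    using assms(1) by simp
qed

section \<open>Nonseparable configurations\<close>

lemma nonseparable_lower_face: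
  assumes "nonseparable Ap Am"
  obtains u u0 where "\<And>a. a \<in> Ap \<Longrightarrow> u \<bullet> rv a + u0 \<le> w a"
    and "rv ` Am \<subseteq> convex hull (rv ` {a \<in> Ap. u \<bullet> rv a + u0 = w a})"
proof -
  obtain D where D: "D \<in> common_refinement_ncells Ap" "rv ` Am \<subseteq> D"
    using assms by (auto simp: nonseparable_def)
  then obtain C where C: "\<forall>w. C w \<in> regular_cells Ap w" "D = (\<Inter>w. C w)"
    by (auto simp: common_refinement_ncells_def common_refinement_def)
  from C(1) obtain \<sigma> u u0 where cell: "C w = convex hull (rv ` \<sigma>)"
      and lower: "\<forall>a\<in>Ap. u \<bullet> rv a + u0 \<le> w a" and face: "\<sigma> = {a \<in> Ap. u \<bullet> rv a + u0 = w a}"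
    unfolding regular_cells_def by blast
  have "rv ` Am \<subseteq> C w"
    using D(2) C(2) by blast
  with cell face have "rv ` Am \<subseteq> convex hull (rv ` {a \<in> Ap. u \<bullet> rv a + u0 = w a})"
    by simp
  with lower show ?thesis
    using that by blast
qed

lemma nonseparable_exp_sandwich:
  assumes "nonseparable Ap Am"
  obtains u u0 where "\<And>a. a \<in> Ap \<Longrightarrow> u \<bullet> rv a + u0 \<le> exp (rv a \<bullet> y)"
    and "\<And>b. b \<in> Am \<Longrightarrow> exp (rv b \<bullet> y) \<le> u \<bullet> rv b + u0"
proof -
  obtain u u0 where lower: "\<And>a. a \<in> Ap \<Longrightarrow> u \<bullet> rv a + u0 \<le> exp (rv a \<bullet> y)"
    and face: "rv ` Am \<subseteq> convex hull (rv ` {a \<in> Ap. u \<bullet> rv a + u0 = exp (rv a \<bullet> y)})"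
    using nonseparable_lower_face[OF assms, of "\<lambda>a. exp (rv a \<bullet> y)"] by blast
  have upper: "exp (rv b \<bullet> y) \<le> u \<bullet> rv b + u0" if "b \<in> Am" for b
  proof (rule exp_inner_le_affine_on_convex_hull)
    show "rv b \<in> convex hull (rv ` {a \<in> Ap. u \<bullet> rv a + u0 = exp (rv a \<bullet> y)})"
      using face that by blast
  qed auto
  show ?thesis
    by (rule that[OF lower upper])
qed

definition balanced_weights ::
    "(int ^ 'n) set \<Rightarrow> (int ^ 'n) set \<Rightarrow> (int ^ 'n \<Rightarrow> real) \<Rightarrow> (int ^ 'n \<Rightarrow> real) \<Rightarrow> bool" where
  "balanced_weights Ap Am \<alpha> \<beta> \<longleftrightarrow>
     sum \<alpha> Ap = sum \<beta> Am \<and> (\<Sum>a\<in>Ap. \<alpha> a *\<^sub>R rv a) = (\<Sum>b\<in>Am. \<beta> b *\<^sub>R rv b)"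

lemma balanced_weights_affine_sum:
  assumes "balanced_weights Ap Am \<alpha> \<beta>"
  shows "(\<Sum>b\<in>Am. \<beta> b * (u \<bullet> rv b + u0)) = (\<Sum>a\<in>Ap. \<alpha> a * (u \<bullet> rv a + u0))"
proof -
  have affine: "(\<Sum>x\<in>X. \<gamma> x * (u \<bullet> rv x + u0)) = u \<bullet> (\<Sum>x\<in>X. \<gamma> x *\<^sub>R rv x) + u0 * sum \<gamma> X"
    for X \<gamma>
    by (simp add: inner_sum_right sum.distrib sum_distrib_left sum_distrib_right algebra_simps)
  with assms show ?thesis
    by (simp add: balanced_weights_def)
qed

lemma closed_balanced_weights:
  fixes \<alpha> \<beta> :: "'a::topological_space \<Rightarrow> int ^ 'n \<Rightarrow> real"
  assumes "\<And>a. continuous_on UNIV (\<lambda>w. \<alpha> w a)" and "\<And>b. continuous_on UNIV (\<lambda>w. \<beta> w b)"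
  shows "closed {w. balanced_weights Ap Am (\<alpha> w) (\<beta> w)}"
  unfolding balanced_weights_def Collect_conj_eq
  by (intro closed_Int closed_Collect_eq continuous_intros assms)

lemma balanced_exp_sum_le:
  assumes "nonseparable Ap Am" and "balanced_weights Ap Am \<alpha> \<beta>"
    and "\<And>a. a \<in> Ap \<Longrightarrow> 0 \<le> \<alpha> a" and "\<And>b. b \<in> Am \<Longrightarrow> 0 \<le> \<beta> b"
  shows "(\<Sum>b\<in>Am. \<beta> b * exp (rv b \<bullet> y)) \<le> (\<Sum>a\<in>Ap. \<alpha> a * exp (rv a \<bullet> y))"
proof -
  obtain u u0 where lower: "\<And>a. a \<in> Ap \<Longrightarrow> u \<bullet> rv a + u0 \<le> exp (rv a \<bullet> y)"
    and upper: "\<And>b. b \<in> Am \<Longrightarrow> exp (rv b \<bullet> y) \<le> u \<bullet> rv b + u0"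
    using nonseparable_exp_sandwich[OF assms(1)] by blast
  have "(\<Sum>b\<in>Am. \<beta> b * exp (rv b \<bullet> y)) \<le> (\<Sum>b\<in>Am. \<beta> b * (u \<bullet> rv b + u0))"
    using upper assms(4) by (intro sum_mono mult_left_mono) auto
  also have "\<dots> = (\<Sum>a\<in>Ap. \<alpha> a * (u \<bullet> rv a + u0))"
    by (rule balanced_weights_affine_sum[OF assms(2)])
  also have "\<dots> \<le> (\<Sum>a\<in>Ap. \<alpha> a * exp (rv a \<bullet> y))"
    using lower assms(3) by (intro sum_mono mult_left_mono) auto
  finally show ?thesis .
qed

lemma balanced_exp_sum_eq_tight:
  assumes "finite Ap" "finite Am" "nonseparable Ap Am" and "balanced_weights Ap Am \<alpha> \<beta>"
    and \<alpha>_pos: "\<And>a. a \<in> Ap \<Longrightarrow> 0 < \<alpha> a" and \<beta>_nonneg: "\<And>b. b \<in> Am \<Longrightarrow> 0 \<le> \<beta> b"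
    and eq: "(\<Sum>b\<in>Am. \<beta> b * exp (rv b \<bullet> y)) = (\<Sum>a\<in>Ap. \<alpha> a * exp (rv a \<bullet> y))"
  obtains u u0 where "\<And>a. a \<in> Ap \<Longrightarrow> exp (rv a \<bullet> y) = u \<bullet> rv a + u0"
    and "\<And>b. b \<in> Am \<Longrightarrow> 0 < \<beta> b \<Longrightarrow> exp (rv b \<bullet> y) = u \<bullet> rv b + u0"
proof -
  obtain u u0 where lower: "\<And>a. a \<in> Ap \<Longrightarrow> u \<bullet> rv a + u0 \<le> exp (rv a \<bullet> y)"
    and upper: "\<And>b. b \<in> Am \<Longrightarrow> exp (rv b \<bullet> y) \<le> u \<bullet> rv b + u0"
    using nonseparable_exp_sandwich[OF assms(3)] by blast
  let ?S1 = "\<Sum>b\<in>Am. \<beta> b * exp (rv b \<bullet> y)" and ?S2 = "\<Sum>b\<in>Am. \<beta> b * (u \<bullet> rv b + u0)"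
  let ?S3 = "\<Sum>a\<in>Ap. \<alpha> a * (u \<bullet> rv a + u0)" and ?S4 = "\<Sum>a\<in>Ap. \<alpha> a * exp (rv a \<bullet> y)"
  have le1: "\<And>b. b \<in> Am \<Longrightarrow> \<beta> b * exp (rv b \<bullet> y) \<le> \<beta> b * (u \<bullet> rv b + u0)"
    using upper \<beta>_nonneg by (simp add: mult_left_mono)
  have le3: "\<And>a. a \<in> Ap \<Longrightarrow> \<alpha> a * (u \<bullet> rv a + u0) \<le> \<alpha> a * exp (rv a \<bullet> y)"
    using lower \<alpha>_pos by (simp add: mult_left_mono less_imp_le)
  have "?S1 \<le> ?S2" "?S3 \<le> ?S4"
    using le1 le3 by (simp_all add: sum_mono)
  moreover have "?S2 = ?S3"
    by (rule balanced_weights_affine_sum[OF assms(4)])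
  ultimately have "?S1 = ?S2" "?S3 = ?S4"
    using eq by linarith+
  show ?thesis
  proof (rule that)
    show "exp (rv a \<bullet> y) = u \<bullet> rv a + u0" if "a \<in> Ap" for a
      using sum_mono_inv[OF \<open>?S3 = ?S4\<close> le3 that \<open>finite Ap\<close>] \<alpha>_pos[OF that] by simp
    show "exp (rv b \<bullet> y) = u \<bullet> rv b + u0" if "b \<in> Am" "0 < \<beta> b" for b
      using sum_mono_inv[OF \<open>?S1 = ?S2\<close> le1 that(1) \<open>finite Am\<close>] that(2) by simp
  qed
qed

section \<open>Uniqueness of critical points\<close>

locale lifted_configuration =
  fixes Ap Am :: "(int ^ 'n::finite) set" and h :: "int ^ 'n \<Rightarrow> int"
    and lam :: "int ^ 'n \<Rightarrow> real" and b1 :: "int ^ 'n"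
  assumes finite_Ap: "finite Ap" and finite_Am: "finite Am" and Ap_nonempty: "Ap \<noteq> {}"
    and full_dim: "full_dimensional (Ap \<union> Am)" and nonsep: "nonseparable Ap Am"
    and lifts: "lifts Ap Am h" and b1_in_Am: "b1 \<in> Am"
    and lam_pos: "\<And>a. a \<in> Ap \<Longrightarrow> 0 < lam a" and sum_lam: "sum lam Ap = 1"
    and barycenter_lam: "(\<Sum>a\<in>Ap. lam a *\<^sub>R rv a) = rv b1"
begin

lemma h_Ap: "a \<in> Ap \<Longrightarrow> h a = 0" and h_Am: "b \<in> Am \<Longrightarrow> 0 < h b"
  using lifts by (auto simp: lifts_def)

lemma Am_in_convex_hull_Ap: "b \<in> Am \<Longrightarrow> rv b \<in> convex hull (rv ` Ap)"
  using nonsep rel_interior_subset by (auto simp: nonseparable_def)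

lemma aff_dim_convex_hull_Ap: "aff_dim (convex hull (rv ` Ap)) = DIM(real ^ 'n)"
proof -
  have "convex hull (rv ` (Ap \<union> Am)) = convex hull (rv ` Ap)"
    using Am_in_convex_hull_Ap
    by (intro antisym hull_minimal hull_mono) (auto intro: hull_inc)
  with full_dim show ?thesis
    by (simp add: full_dimensional_def)
qed

definition log_fpoly :: "(int ^ 'n \<Rightarrow> real) \<Rightarrow> real \<Rightarrow> real ^ 'n \<Rightarrow> real" where
  "log_fpoly C t y =
     (\<Sum>a\<in>Ap. C a * exp (rv a \<bullet> y)) - (\<Sum>b\<in>Am. C b * t ^ nat (h b) * exp (rv b \<bullet> y))"

definition log_crit :: "(int ^ 'n \<Rightarrow> real) \<Rightarrow> real \<Rightarrow> real ^ 'n \<Rightarrow> bool" where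
  "log_crit C t y \<longleftrightarrow> 0 < t \<and>
     balanced_weights Ap Am (\<lambda>a. C a * exp (rv a \<bullet> y)) (\<lambda>b. C b * t ^ nat (h b) * exp (rv b \<bullet> y))"

lemma star_pow_Ap: "a \<in> Ap \<Longrightarrow> star_pow C t h a = C a"
  by (simp add: star_pow_def h_Ap)

lemma star_pow_Am: "b \<in> Am \<Longrightarrow> star_pow C t h b = C b * t ^ nat (h b)"
  using h_Am[of b] by (simp add: star_pow_def power_int_def)

lemma fpoly_vexp: "fpoly Ap Am (star_pow C t h) (vexp y) = log_fpoly C t y"
  by (simp add: fpoly_def log_fpoly_def monom_val_vexp star_pow_Ap star_pow_Am cong: sum.cong)

lemma crit_sys_vexp_eq_0_iff:
  "0 < t \<Longrightarrow> crit_sys Ap Am (star_pow C t h) (vexp y) = 0 \<longleftrightarrow> log_crit C t y"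
  by (simp add: crit_sys_eq_0_iff less_imp_neq[symmetric] fpoly_vexp log_fpoly_def log_crit_def
      balanced_weights_def monom_val_vexp star_pow_Ap star_pow_Am cong: sum.cong)

lemma log_crit_imp_log_fpoly_eq_0: "log_crit C t y \<Longrightarrow> log_fpoly C t y = 0"
  by (simp add: log_crit_def balanced_weights_def log_fpoly_def)

lemma log_fpoly_shift:
  "log_fpoly C t (y0 + d) =
     (\<Sum>a\<in>Ap. (C a * exp (rv a \<bullet> y0)) * exp (rv a \<bullet> d)) -
     (\<Sum>b\<in>Am. (C b * t ^ nat (h b) * exp (rv b \<bullet> y0)) * exp (rv b \<bullet> d))"
  by (simp add: log_fpoly_def inner_add_right exp_add mult_ac)

text \<open>At a critical point the shifted coefficients are balanced weights, so the critical
  point is a global minimum of \<open>log_fpoly\<close> at its level.\<close>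

lemma log_fpoly_nonneg_at_crit:
  assumes "\<And>a. a \<in> Ap \<union> Am \<Longrightarrow> 0 \<le> C a" and crit: "log_crit C t y0"
  shows "0 \<le> log_fpoly C t y"
proof -
  have "0 < t"
    using crit by (simp add: log_crit_def)
  then have "(\<Sum>b\<in>Am. (C b * t ^ nat (h b) * exp (rv b \<bullet> y0)) * exp (rv b \<bullet> (y - y0)))
      \<le> (\<Sum>a\<in>Ap. (C a * exp (rv a \<bullet> y0)) * exp (rv a \<bullet> (y - y0)))"
    using crit assms(1) by (intro balanced_exp_sum_le[OF nonsep]) (auto simp: log_crit_def)
  then show ?thesis
    using log_fpoly_shift[of C t y0 "y - y0"] by simp
qed

lemma log_fpoly_strict_antimono:
  assumes "\<And>b. b \<in> Am \<Longrightarrow> 0 \<le> C b" "0 < C b1" "0 < t1" "t1 < t2"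
  shows "log_fpoly C t2 y < log_fpoly C t1 y"
proof -
  have "(\<Sum>b\<in>Am. C b * t1 ^ nat (h b) * exp (rv b \<bullet> y)) < (\<Sum>b\<in>Am. C b * t2 ^ nat (h b) * exp (rv b \<bullet> y))"
  proof (rule sum_strict_mono_ex1[OF finite_Am])
    show "\<forall>b\<in>Am. C b * t1 ^ nat (h b) * exp (rv b \<bullet> y) \<le> C b * t2 ^ nat (h b) * exp (rv b \<bullet> y)"
      using assms by (auto intro!: mult_right_mono mult_left_mono power_mono)
    have "t1 ^ nat (h b1) < t2 ^ nat (h b1)"
      using assms h_Am[OF b1_in_Am] by (intro power_strict_mono) auto
    then show "\<exists>b\<in>Am. C b * t1 ^ nat (h b) * exp (rv b \<bullet> y) < C b * t2 ^ nat (h b) * exp (rv b \<bullet> y)"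
      using b1_in_Am assms(2) by (intro bexI[of _ b1]) auto
  qed
  then show ?thesis
    by (simp add: log_fpoly_def)
qed

text \<open>Equality forces the exponential to be affine on \<open>Ap\<close> and at \<open>b1\<close>, a strict
  convex combination of \<open>Ap\<close>; strict convexity of \<open>exp\<close> then makes \<open>y\<close> constant on \<open>Ap\<close>.\<close>

lemma balanced_exp_sum_eq_imp_zero:
  assumes "balanced_weights Ap Am \<alpha> \<beta>"
    and "\<And>a. a \<in> Ap \<Longrightarrow> 0 < \<alpha> a" "\<And>b. b \<in> Am \<Longrightarrow> 0 \<le> \<beta> b" "0 < \<beta> b1"
    and "(\<Sum>b\<in>Am. \<beta> b * exp (rv b \<bullet> y)) = (\<Sum>a\<in>Ap. \<alpha> a * exp (rv a \<bullet> y))"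
  shows "y = 0"
proof -
  obtain u u0 where on_Ap: "\<And>a. a \<in> Ap \<Longrightarrow> exp (rv a \<bullet> y) = u \<bullet> rv a + u0"
    and at_b1: "exp (rv b1 \<bullet> y) = u \<bullet> rv b1 + u0"
    using balanced_exp_sum_eq_tight[OF finite_Ap finite_Am nonsep assms(1-3,5)] assms(4) b1_in_Am
    by metis
  define m where "m = (\<Sum>a\<in>Ap. lam a * (rv a \<bullet> y))"
  have "balanced_weights Ap {b1} lam (\<lambda>_. 1)"
    using sum_lam barycenter_lam by (simp add: balanced_weights_def)
  then have "(\<Sum>a\<in>Ap. lam a * exp (rv a \<bullet> y)) = u \<bullet> rv b1 + u0"
    using balanced_weights_affine_sum[of Ap "{b1}" lam "\<lambda>_. 1" u u0] on_Ap by simp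
  also have "\<dots> = exp m"
  proof -
    have "rv b1 \<bullet> y = m"
      unfolding m_def barycenter_lam[symmetric] by (simp add: inner_sum_left)
    with at_b1 show ?thesis
      by simp
  qed
  finally have "rv a \<bullet> y = m" if "a \<in> Ap" for a
    using exp_sum_eq_imp_constant[OF finite_Ap lam_pos sum_lam _ that] by (simp add: m_def)
  then show "y = 0"
    using inner_constant_on_full_dim_imp_zero[OF aff_dim_convex_hull_Ap, of y m] by blast
qed

lemma log_crit_unique:
  assumes pos: "\<And>a. a \<in> Ap \<Longrightarrow> 0 < C a" "\<And>b. b \<in> Am \<Longrightarrow> 0 \<le> C b" "0 < C b1"
    and crit: "log_crit C t1 y1" "log_crit C t2 y2"
  shows "t1 = t2 \<and> y1 = y2"
proof -
  have nonneg: "\<And>a. a \<in> Ap \<union> Am \<Longrightarrow> 0 \<le> C a"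
    using pos by (auto intro: less_imp_le)
  have not_less: "\<not> s1 < s2" if "log_crit C s1 z1" "log_crit C s2 z2" for s1 s2 z1 z2
  proof
    assume "s1 < s2"
    with that pos have "log_fpoly C s2 z1 < log_fpoly C s1 z1"
      by (intro log_fpoly_strict_antimono) (auto simp: log_crit_def)
    with log_crit_imp_log_fpoly_eq_0[OF that(1)] log_fpoly_nonneg_at_crit[OF nonneg that(2), of z1]
    show False
      by linarith
  qed
  with crit have "t1 = t2"
    by (meson linorder_neqE_linordered_idom)
  then have "(\<Sum>b\<in>Am. (C b * t1 ^ nat (h b) * exp (rv b \<bullet> y1)) * exp (rv b \<bullet> (y2 - y1)))
      = (\<Sum>a\<in>Ap. (C a * exp (rv a \<bullet> y1)) * exp (rv a \<bullet> (y2 - y1)))"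
    using log_crit_imp_log_fpoly_eq_0[OF crit(2)] log_fpoly_shift[of C t1 y1 "y2 - y1"] by simp
  then have "y2 - y1 = 0"
    using crit(1) pos b1_in_Am
    by (intro balanced_exp_sum_eq_imp_zero) (auto simp: log_crit_def)
  with \<open>t1 = t2\<close> show ?thesis
    by simp
qed

section \<open>Existence of critical points\<close>

lemma Am_margin:
  obtains r where "0 < r" "\<And>b. b \<in> Am \<Longrightarrow> cball (rv b) r \<subseteq> convex hull (rv ` Ap)"
proof -
  have "affine hull (convex hull (rv ` Ap)) = UNIV"
    using aff_dim_convex_hull_Ap aff_dim_eq_full by fastforce
  then have "rv ` Am \<subseteq> interior (convex hull (rv ` Ap))"
    using nonsep by (simp add: nonseparable_def rel_interior_interior)
  then obtain r where "0 < r" "(\<Union>p\<in>rv ` Am. cball p r) \<subseteq> interior (convex hull (rv ` Ap))"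
    using compact_subset_open_imp_cball_epsilon_subset finite_Am
    by (metis finite_imageI finite_imp_compact open_interior)
  with interior_subset that show ?thesis
    by blast
qed

lemma continuous_on_log_fpoly: "continuous_on S (\<lambda>z. log_fpoly C (fst z) (snd z))"
  unfolding log_fpoly_def by (intro continuous_intros)

lemma log_fpoly_nonneg_imp_log_crit:
  assumes "0 < t" and "\<And>y. 0 \<le> log_fpoly C t y" and "log_fpoly C t y0 = 0"
  shows "log_crit C t y0"
proof -
  have "crit_sys Ap Am (star_pow C t h) (vexp y0) = 0"
  proof (rule crit_sys_eq_0_at_min)
    show "0 \<le> fpoly Ap Am (star_pow C t h) x" if "\<And>j. 0 < x $ j" for x
      using assms(2)[of "vln x"] fpoly_vexp[of C t "vln x"] by (simp add: vexp_vln[OF that])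
  qed (simp_all add: fpoly_vexp assms(3))
  with assms(1) show ?thesis
    by (simp add: crit_sys_vexp_eq_0_iff)
qed

lemma log_fpoly_neg_left:
  assumes "0 < t" and "log_fpoly C t y < 0"
  obtains t' where "0 < t'" "t' < t" "log_fpoly C t' y < 0"
proof -
  have "isCont (\<lambda>t. log_fpoly C t y) t"
    unfolding log_fpoly_def by (intro continuous_intros)
  then obtain d where "0 < d" and d: "\<And>t'. t' \<noteq> t \<and> \<bar>t - t'\<bar> < d \<Longrightarrow> log_fpoly C t' y < 0"
    using LIM_fun_less_zero[OF _ assms(2)] by (metis isCont_def)
  show ?thesis
    using \<open>0 < d\<close> \<open>0 < t\<close> d[of "t - min (d / 2) (t / 2)"]
    by (intro that[of "t - min (d / 2) (t / 2)"]) (auto simp: min_def)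
qed

definition coeff_bounds :: "(int ^ 'n \<Rightarrow> real) \<Rightarrow> real \<Rightarrow> real \<Rightarrow> real \<Rightarrow> bool" where
  "coeff_bounds C cmin cmax cb1 \<longleftrightarrow>
     (\<forall>a\<in>Ap. cmin \<le> C a \<and> C a \<le> cmax) \<and> (\<forall>b\<in>Am. 0 \<le> C b \<and> C b \<le> cmax) \<and> cb1 \<le> C b1"

lemma coeff_bounds_pos:
  assumes "coeff_bounds C cmin cmax cb1" "0 < cmin" "0 < cb1"
  shows "\<And>a. a \<in> Ap \<Longrightarrow> 0 < C a" "\<And>a. a \<in> Ap \<union> Am \<Longrightarrow> 0 \<le> C a" "0 < C b1"
  using assms by (force simp: coeff_bounds_def)+

lemma coeff_bounds_sum_Ap_ge:
  assumes "coeff_bounds C cmin cmax cb1"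
  shows "cmin * (\<Sum>a\<in>Ap. exp (rv a \<bullet> y)) \<le> (\<Sum>a\<in>Ap. C a * exp (rv a \<bullet> y))"
  unfolding sum_distrib_left
  using assms by (intro sum_mono mult_right_mono) (auto simp: coeff_bounds_def)

lemma log_fpoly_pos_small_t:
  assumes bounds: "coeff_bounds C cmin cmax cb1" and "0 < cmin"
    and t: "0 < t" "t < min 1 (cmin / (real (card Am) * cmax + 1))"
  shows "0 < log_fpoly C t y"
proof -
  define S where "S = (\<Sum>a\<in>Ap. exp (rv a \<bullet> y))"
  have "0 < S"
    unfolding S_def using finite_Ap Ap_nonempty by (intro sum_pos) auto
  have "0 \<le> cmax"
    using bounds b1_in_Am by (force simp: coeff_bounds_def)
  have "(\<Sum>b\<in>Am. C b * t ^ nat (h b) * exp (rv b \<bullet> y)) \<le> (\<Sum>b\<in>Am. cmax * t * S)"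
  proof (rule sum_mono)
    fix b assume "b \<in> Am"
    then have "C b * t ^ nat (h b) \<le> cmax * t"
      using bounds t h_Am[of b] power_decreasing[of 1 "nat (h b)" t]
      by (intro mult_mono) (auto simp: coeff_bounds_def)
    moreover have "exp (rv b \<bullet> y) \<le> S"
      unfolding S_def using finite_Ap Am_in_convex_hull_Ap[OF \<open>b \<in> Am\<close>]
      by (rule exp_inner_le_sum_on_convex_hull)
    ultimately show "C b * t ^ nat (h b) * exp (rv b \<bullet> y) \<le> cmax * t * S"
      by (rule mult_mono) (use \<open>0 \<le> cmax\<close> t in auto)
  qed
  also have "\<dots> = (real (card Am) * cmax * t) * S"
    by simp
  also have "\<dots> < cmin * S"
  proof -
    have "t * (real (card Am) * cmax + 1) < cmin"
      using t \<open>0 \<le> cmax\<close> by (simp add: less_divide_eq add_nonneg_pos)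
    with t show ?thesis
      using \<open>0 < S\<close> by (simp add: algebra_simps)
  qed
  also have "\<dots> \<le> (\<Sum>a\<in>Ap. C a * exp (rv a \<bullet> y))"
    unfolding S_def by (rule coeff_bounds_sum_Ap_ge[OF bounds])
  finally show ?thesis
    by (simp add: log_fpoly_def)
qed

lemma log_fpoly_neg_large_t:
  assumes bounds: "coeff_bounds C cmin cmax cb1" and "0 < cb1"
    and t: "max 1 (real (card Ap) * cmax / cb1) < t"
  shows "log_fpoly C t 0 < 0"
proof -
  have "(\<Sum>a\<in>Ap. C a) \<le> real (card Ap) * cmax"
    using bounds by (intro sum_bounded_above) (auto simp: coeff_bounds_def)
  also have "\<dots> < cb1 * t"
    using t \<open>0 < cb1\<close> by (simp add: divide_less_eq mult.commute)
  also have "\<dots> \<le> C b1 * t ^ nat (h b1)"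
    using bounds t \<open>0 < cb1\<close> h_Am[OF b1_in_Am] power_increasing[of 1 "nat (h b1)" t]
    by (intro mult_mono) (auto simp: coeff_bounds_def)
  also have "\<dots> \<le> (\<Sum>b\<in>Am. C b * t ^ nat (h b))"
    using bounds t b1_in_Am finite_Am by (intro member_le_sum) (auto simp: coeff_bounds_def)
  finally show ?thesis
    by (simp add: log_fpoly_def)
qed

lemma log_fpoly_coercive:
  assumes bounds: "coeff_bounds C cmin cmax cb1"
    and r: "0 < r" "\<And>b. b \<in> Am \<Longrightarrow> cball (rv b) r \<subseteq> convex hull (rv ` Ap)"
    and t: "0 < t" "t \<le> T" and "1 \<le> T" and nonpos: "log_fpoly C t y \<le> 0"
  shows "cmin * exp (r * norm y) \<le> real (card Am) * cmax * (\<Sum>b\<in>Am. T ^ nat (h b))"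
proof -
  define S where "S = (\<Sum>a\<in>Ap. exp (rv a \<bullet> y))"
  define B where "B = (\<Sum>b\<in>Am. T ^ nat (h b))"
  have "0 < S"
    unfolding S_def using finite_Ap Ap_nonempty by (intro sum_pos) auto
  have "0 \<le> cmax"
    using bounds b1_in_Am by (force simp: coeff_bounds_def)
  have "cmin * S * exp (r * norm y) \<le> (\<Sum>b\<in>Am. C b * t ^ nat (h b) * exp (rv b \<bullet> y)) * exp (r * norm y)"
    using coeff_bounds_sum_Ap_ge[OF bounds, of y] nonpos by (simp add: S_def log_fpoly_def)
  also have "\<dots> = (\<Sum>b\<in>Am. (C b * t ^ nat (h b)) * exp (rv b \<bullet> y + r * norm y))"
    by (simp add: sum_distrib_left sum_distrib_right exp_add mult_ac)
  also have "\<dots> \<le> (\<Sum>b\<in>Am. (cmax * B) * S)"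
  proof (rule sum_mono)
    fix b assume "b \<in> Am"
    have "t ^ nat (h b) \<le> T ^ nat (h b)"
      using t by (intro power_mono) auto
    also have "\<dots> \<le> B"
      unfolding B_def using \<open>1 \<le> T\<close> \<open>b \<in> Am\<close> finite_Am by (intro member_le_sum) auto
    finally have "t ^ nat (h b) \<le> B" .
    then have coeff: "C b * t ^ nat (h b) \<le> cmax * B"
      using bounds \<open>b \<in> Am\<close> t by (intro mult_mono) (auto simp: coeff_bounds_def)
    have "0 \<le> B"
      using order_trans[OF zero_le_power \<open>t ^ nat (h b) \<le> B\<close>] t by simp
    have "exp (rv b \<bullet> y + r * norm y) \<le> S"
      unfolding S_def using finite_Ap r \<open>b \<in> Am\<close>
      by (intro exp_inner_margin_le_sum_on_convex_hull) auto
    with coeff show "C b * t ^ nat (h b) * exp (rv b \<bullet> y + r * norm y) \<le> cmax * B * S"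
      by (rule mult_mono) (use \<open>0 \<le> cmax\<close> \<open>0 \<le> B\<close> in auto)
  qed
  also have "\<dots> = real (card Am) * cmax * B * S"
    by simp
  finally show ?thesis
    using \<open>0 < S\<close> by (simp add: B_def mult_ac)
qed

text \<open>Bounds making the part of \<open>{log_fpoly C \<le> 0}\<close> below level \<open>thi\<close> a nonempty
  compact set.\<close>

definition log_fpoly_confined :: "(int ^ 'n \<Rightarrow> real) \<Rightarrow> real \<Rightarrow> real \<Rightarrow> real \<Rightarrow> bool" where
  "log_fpoly_confined C tlo thi R \<longleftrightarrow> 0 < tlo \<and> tlo \<le> thi \<and>
     (\<forall>t y. 0 < t \<and> t < tlo \<longrightarrow> 0 < log_fpoly C t y) \<and> log_fpoly C thi 0 < 0 \<and>
     (\<forall>t y. 0 < t \<and> t \<le> thi \<and> log_fpoly C t y \<le> 0 \<longrightarrow> norm y \<le> R)"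

lemma log_fpoly_confinedD:
  assumes "log_fpoly_confined C tlo thi R"
  shows "0 < tlo" "tlo \<le> thi" "log_fpoly C thi 0 < 0"
    and "\<And>t y. 0 < t \<Longrightarrow> t < tlo \<Longrightarrow> 0 < log_fpoly C t y"
    and "\<And>t y. 0 < t \<Longrightarrow> t \<le> thi \<Longrightarrow> log_fpoly C t y \<le> 0 \<Longrightarrow> norm y \<le> R"
  using assms by (auto simp: log_fpoly_confined_def)

lemma coeff_bounds_confined:
  assumes "0 < cmin" "0 < cb1"
  obtains tlo thi R where "\<And>C. coeff_bounds C cmin cmax cb1 \<Longrightarrow> log_fpoly_confined C tlo thi R"
proof -
  obtain r where r: "0 < r" "\<And>b. b \<in> Am \<Longrightarrow> cball (rv b) r \<subseteq> convex hull (rv ` Ap)"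
    using Am_margin by blast
  define tlo where "tlo = min 1 (cmin / (real (card Am) * cmax + 1))"
  define thi where "thi = max 1 (real (card Ap) * cmax / cb1) + 1"
  define K where "K = real (card Am) * cmax * (\<Sum>b\<in>Am. thi ^ nat (h b))"
  have "log_fpoly_confined C tlo thi (ln (K / cmin) / r)" if bounds: "coeff_bounds C cmin cmax cb1" for C
    unfolding log_fpoly_confined_def
  proof (intro conjI allI impI)
    have "0 \<le> cmax"
      using bounds b1_in_Am by (force simp: coeff_bounds_def)
    then show "0 < tlo" "tlo \<le> thi"
      using assms by (simp_all add: tlo_def thi_def add_nonneg_pos)
    show "0 < log_fpoly C t y" if "0 < t \<and> t < tlo" for t y
      using log_fpoly_pos_small_t[OF bounds \<open>0 < cmin\<close>] that by (simp add: tlo_def)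
    show "log_fpoly C thi 0 < 0"
      by (rule log_fpoly_neg_large_t[OF bounds \<open>0 < cb1\<close>]) (simp add: thi_def)
    show "norm y \<le> ln (K / cmin) / r" if "0 < t \<and> t \<le> thi \<and> log_fpoly C t y \<le> 0" for t y
    proof -
      have "cmin * exp (r * norm y) \<le> K"
        using log_fpoly_coercive[OF bounds r, of t thi] that by (simp add: K_def thi_def)
      then have "exp (r * norm y) \<le> K / cmin"
        using \<open>0 < cmin\<close> by (simp add: le_divide_eq mult.commute)
      then have "r * norm y \<le> ln (K / cmin)"
        by (metis exp_gt_zero less_le_trans ln_ge_iff)
      then show ?thesis
        using \<open>0 < r\<close> by (simp add: pos_le_divide_eq mult.commute)
    qed
  qed
  then show ?thesis
    by (rule that)
qed

text \<open>Take a point of the compact sublevel set with least \<open>t\<close>; at that level \<open>log_fpoly\<close>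
  is nonnegative, since a negative value could be pushed to a smaller \<open>t\<close>.\<close>

lemma log_fpoly_confined_imp_log_crit:
  assumes "log_fpoly_confined C tlo thi R"
  obtains t y where "log_crit C t y"
proof -
  note conf = log_fpoly_confinedD[OF assms]
  define Z where "Z = ({tlo..thi} \<times> cball 0 R) \<inter> {z. log_fpoly C (fst z) (snd z) \<le> 0}"
  have "compact Z"
    unfolding Z_def
    by (intro compact_Int_closed compact_Times compact_Icc compact_cball closed_Collect_le
        continuous_on_log_fpoly continuous_on_const)
  moreover have "(thi, 0) \<in> Z"
    using conf(1-3) conf(5)[of thi 0] by (simp add: Z_def)
  ultimately obtain ts ys where "(ts, ys) \<in> Z" and least: "\<And>z. z \<in> Z \<Longrightarrow> ts \<le> fst z"
    using continuous_attains_inf[of Z fst] continuous_on_fst[OF continuous_on_id] by fastforce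
  then have "0 < ts" "ts \<le> thi" "log_fpoly C ts ys \<le> 0"
    using conf(1) by (auto simp: Z_def)
  have "0 \<le> log_fpoly C ts y" for y
  proof (rule ccontr)
    assume "\<not> 0 \<le> log_fpoly C ts y"
    with \<open>0 < ts\<close> obtain t' where "0 < t'" "t' < ts" "log_fpoly C t' y < 0"
      by (meson log_fpoly_neg_left not_le)
    moreover from this have "tlo \<le> t'"
      using conf(4)[of t' y] by (meson not_le less_asym)
    moreover from calculation have "norm y \<le> R"
      using conf(5)[of t' y] \<open>ts \<le> thi\<close> by simp
    ultimately have "(t', y) \<in> Z"
      using \<open>ts \<le> thi\<close> by (simp add: Z_def)
    with least \<open>t' < ts\<close> show False
      by fastforce
  qed
  with \<open>0 < ts\<close> \<open>log_fpoly C ts ys \<le> 0\<close> have "log_crit C ts ys"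
    by (intro log_fpoly_nonneg_imp_log_crit) (auto intro: antisym)
  then show ?thesis
    by (rule that)
qed

lemma log_crit_confined:
  assumes conf: "log_fpoly_confined C tlo thi R"
    and nonneg: "\<And>a. a \<in> Ap \<union> Am \<Longrightarrow> 0 \<le> C a" and "0 < C b1" and crit: "log_crit C t y"
  shows "tlo \<le> t \<and> t \<le> thi \<and> norm y \<le> R"
proof -
  note conf = log_fpoly_confinedD[OF conf]
  have "0 < t" "log_fpoly C t y = 0"
    using crit log_crit_imp_log_fpoly_eq_0 by (auto simp: log_crit_def)
  have "t \<le> thi"
  proof (rule ccontr)
    assume "\<not> t \<le> thi"
    with conf(1,2) nonneg \<open>0 < C b1\<close> have "log_fpoly C t 0 < log_fpoly C thi 0"
      by (intro log_fpoly_strict_antimono) auto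
    with conf(3) log_fpoly_nonneg_at_crit[OF nonneg crit, of 0] show False
      by simp
  qed
  moreover have "tlo \<le> t"
    using conf(4)[of t y] \<open>0 < t\<close> \<open>log_fpoly C t y = 0\<close> by linarith
  ultimately show ?thesis
    using conf(5)[of t y] \<open>0 < t\<close> \<open>log_fpoly C t y = 0\<close> by simp
qed

end

section \<open>The homotopy\<close>

lemma min_le_convex_comb: "0 \<le> s \<Longrightarrow> s \<le> 1 \<Longrightarrow> min x y \<le> s * x + (1 - s) * (y :: real)"
  using convex_bound_le[of "- x" "- min x y" "- y" s "1 - s"] by simp

locale coefficient_homotopy = lifted_configuration Ap Am h lam b1
  for Ap Am :: "(int ^ 'n::finite) set" and h lam b1 +
  fixes c :: "int ^ 'n \<Rightarrow> real"
  assumes disjoint: "Ap \<inter> Am = {}" and c_pos: "\<And>a. a \<in> Ap \<union> Am \<Longrightarrow> 0 < c a"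
begin

definition c_hat :: "int ^ 'n \<Rightarrow> real" where
  "c_hat a = (if a \<in> Ap then lam a else if a = b1 then 1 else 0)"

definition hcoeff :: "real \<Rightarrow> int ^ 'n \<Rightarrow> real" where
  "hcoeff s a = s * c a + (1 - s) * c_hat a"

lemma hcoeff_1: "hcoeff 1 = c"
  by (simp add: hcoeff_def fun_eq_iff)

lemma log_crit_hcoeff_0: "log_crit (hcoeff 0) 1 0"
proof -
  have "(\<Sum>b\<in>Am. (if b = b1 then 1 else 0) *\<^sub>R rv b) = rv b1"
    using finite_Am b1_in_Am by (simp add: if_distrib[of "\<lambda>r. r *\<^sub>R _"] cong: if_cong)
  then have "balanced_weights Ap Am lam (\<lambda>b. if b = b1 then 1 else 0)"
    using sum_lam barycenter_lam finite_Am b1_in_Am by (simp add: balanced_weights_def)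
  moreover have "b \<notin> Ap" if "b \<in> Am" for b
    using disjoint that by blast
  ultimately show ?thesis
    by (simp add: log_crit_def hcoeff_def c_hat_def balanced_weights_def cong: sum.cong)
qed

lemma c_hat_nonneg: "a \<in> Ap \<union> Am \<Longrightarrow> 0 \<le> c_hat a"
  using lam_pos by (auto simp: c_hat_def less_imp_le)

lemma hcoeff_between:
  assumes "s \<in> {0..1}" and "a \<in> Ap \<union> Am"
  shows "min (c a) (c_hat a) \<le> hcoeff s a" and "hcoeff s a \<le> c a + c_hat a"
proof -
  from assms(1) have "0 \<le> s" "s \<le> 1"
    by auto
  then show "min (c a) (c_hat a) \<le> hcoeff s a"
    unfolding hcoeff_def by (rule min_le_convex_comb)
  show "hcoeff s a \<le> c a + c_hat a"
    unfolding hcoeff_def using \<open>0 \<le> s\<close> \<open>s \<le> 1\<close> c_pos[OF assms(2)] c_hat_nonneg[OF assms(2)]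
    by (intro add_mono mult_left_le_one_le) auto
qed

lemma hcoeff_bounds:
  obtains cmin cmax cb1 where "0 < cmin" "0 < cb1"
    and "\<And>s. s \<in> {0..1} \<Longrightarrow> coeff_bounds (hcoeff s) cmin cmax cb1"
proof -
  define cmin where "cmin = Min ((\<lambda>a. min (c a) (c_hat a)) ` Ap)"
  define cmax where "cmax = (\<Sum>a\<in>Ap \<union> Am. c a + c_hat a)"
  have "c_hat b1 = 1"
    using disjoint b1_in_Am by (auto simp: c_hat_def)
  have "0 < cmin"
    unfolding cmin_def using finite_Ap Ap_nonempty c_pos lam_pos
    by (subst Min_gr_iff) (auto simp: c_hat_def)
  moreover have "0 < min (c b1) (c_hat b1)"
    using c_pos b1_in_Am \<open>c_hat b1 = 1\<close> by simp
  moreover have "coeff_bounds (hcoeff s) cmin cmax (min (c b1) (c_hat b1))" if "s \<in> {0..1}" for s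
  proof -
    have "hcoeff s a \<le> cmax" if "a \<in> Ap \<union> Am" for a
    proof -
      have "hcoeff s a \<le> c a + c_hat a"
        using hcoeff_between(2)[OF \<open>s \<in> {0..1}\<close> that] .
      also have "\<dots> \<le> cmax"
        unfolding cmax_def using finite_Ap finite_Am that c_pos c_hat_nonneg
        by (intro member_le_sum) (auto intro: add_nonneg_nonneg less_imp_le)
      finally show ?thesis .
    qed
    moreover have "cmin \<le> hcoeff s a" if "a \<in> Ap" for a
      using order_trans[OF Min_le hcoeff_between(1)[OF \<open>s \<in> {0..1}\<close>, of a]] finite_Ap that
      unfolding cmin_def by simp
    moreover have "0 \<le> hcoeff s b" if "b \<in> Am" for b
      using hcoeff_between(1)[OF \<open>s \<in> {0..1}\<close>, of b] c_pos[of b] c_hat_nonneg[of b] that by simp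
    ultimately show ?thesis
      using hcoeff_between(1)[OF that, of b1] b1_in_Am by (simp add: coeff_bounds_def)
  qed
  ultimately show ?thesis
    by (rule that)
qed

lemma hcoeff_pos:
  assumes "s \<in> {0..1}"
  shows "\<And>a. a \<in> Ap \<Longrightarrow> 0 < hcoeff s a" "\<And>a. a \<in> Ap \<union> Am \<Longrightarrow> 0 \<le> hcoeff s a"
    and "0 < hcoeff s b1"
proof -
  obtain cmin cmax cb1 where "0 < cmin" "0 < cb1"
    and "\<And>s. s \<in> {0..1} \<Longrightarrow> coeff_bounds (hcoeff s) cmin cmax cb1"
    using hcoeff_bounds by blast
  with assms show "\<And>a. a \<in> Ap \<Longrightarrow> 0 < hcoeff s a" "\<And>a. a \<in> Ap \<union> Am \<Longrightarrow> 0 \<le> hcoeff s a"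
    and "0 < hcoeff s b1"
    using coeff_bounds_pos by blast+
qed

lemma hcoeff_confined:
  obtains tlo thi R where "\<And>s. s \<in> {0..1} \<Longrightarrow> log_fpoly_confined (hcoeff s) tlo thi R"
proof -
  obtain cmin cmax cb1 where "0 < cmin" "0 < cb1"
    and "\<And>s. s \<in> {0..1} \<Longrightarrow> coeff_bounds (hcoeff s) cmin cmax cb1"
    using hcoeff_bounds by blast
  with coeff_bounds_confined that show ?thesis
    by metis
qed

lemma log_crit_hcoeff_ex1:
  assumes "s \<in> {0..1}"
  shows "\<exists>!z. log_crit (hcoeff s) (fst z) (snd z)"
proof -
  obtain tlo thi R where "log_fpoly_confined (hcoeff s) tlo thi R"
    using hcoeff_confined assms by metis
  then obtain t y where "log_crit (hcoeff s) t y"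
    by (rule log_fpoly_confined_imp_log_crit)
  moreover have "z = (t, y)" if "log_crit (hcoeff s) (fst z) (snd z)" for z
    using log_crit_unique[OF hcoeff_pos[OF assms] that \<open>log_crit (hcoeff s) t y\<close>] by (simp add: prod_eq_iff)
  ultimately show ?thesis
    by (intro ex1I[of _ "(t, y)"]) auto
qed

lemma closed_log_crit_hcoeff:
  assumes "closed T" and "\<And>t y. (t, y) \<in> T \<Longrightarrow> 0 < t"
  shows "closed (({0..1} \<times> T) \<inter> {w. log_crit (hcoeff (fst w)) (fst (snd w)) (snd (snd w))})"
proof -
  define \<alpha> where "\<alpha> = (\<lambda>(w :: real \<times> real \<times> (real ^ 'n)) a. hcoeff (fst w) a * exp (rv a \<bullet> snd (snd w)))"
  define \<beta> where "\<beta> = (\<lambda>(w :: real \<times> real \<times> (real ^ 'n)) b.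
    hcoeff (fst w) b * fst (snd w) ^ nat (h b) * exp (rv b \<bullet> snd (snd w)))"
  have "({0..1} \<times> T) \<inter> {w. log_crit (hcoeff (fst w)) (fst (snd w)) (snd (snd w))} =
      ({0..1} \<times> T) \<inter> {w. balanced_weights Ap Am (\<alpha> w) (\<beta> w)}"
    using assms(2) by (auto simp: log_crit_def \<alpha>_def \<beta>_def)
  moreover have "closed {w. balanced_weights Ap Am (\<alpha> w) (\<beta> w)}"
    unfolding \<alpha>_def \<beta>_def hcoeff_def by (intro closed_balanced_weights continuous_intros)
  ultimately show ?thesis
    using assms(1) by (simp add: closed_Int closed_Times)
qed

lemma log_crit_path:
  obtains p where "continuous_on {0..1} p"
    and "\<And>s. s \<in> {0..1} \<Longrightarrow> log_crit (hcoeff s) (fst (p s)) (snd (p s))"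
    and "\<And>s t y. s \<in> {0..1} \<Longrightarrow> log_crit (hcoeff s) t y \<Longrightarrow> (t, y) = p s"
proof -
  obtain tlo thi R where conf: "\<And>s. s \<in> {0..1} \<Longrightarrow> log_fpoly_confined (hcoeff s) tlo thi R"
    using hcoeff_confined by blast
  define p where "p s = (THE z. log_crit (hcoeff s) (fst z) (snd z))" for s
  have p: "log_crit (hcoeff s) (fst (p s)) (snd (p s))" if "s \<in> {0..1}" for s
    unfolding p_def by (rule theI'[OF log_crit_hcoeff_ex1[OF that]])
  have p_unique: "(t, y) = p s" if "s \<in> {0..1}" "log_crit (hcoeff s) t y" for s t y
    unfolding p_def using that by (intro the1_equality[symmetric] log_crit_hcoeff_ex1) auto
  define T where "T = {tlo..thi} \<times> cball (0 :: real ^ 'n) R"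
  have "0 < tlo"
    using log_fpoly_confinedD(1)[OF conf[of 0]] by simp
  have pT: "p s \<in> T" if "s \<in> {0..1}" for s
    using log_crit_confined[OF conf[OF that] hcoeff_pos(2,3)[OF that] p[OF that]]
    by (auto simp: T_def mem_Times_iff)
  have "(\<lambda>s. (s, p s)) ` {0..1} =
      ({0..1} \<times> T) \<inter> {w. log_crit (hcoeff (fst w)) (fst (snd w)) (snd (snd w))}"
  proof (intro equalityI subsetI)
    fix w assume "w \<in> ({0..1} \<times> T) \<inter> {w. log_crit (hcoeff (fst w)) (fst (snd w)) (snd (snd w))}"
    then show "w \<in> (\<lambda>s. (s, p s)) ` {0..1}"
      using p_unique by (cases w) force
  qed (use p pT in auto)
  moreover have "closed (({0..1} \<times> T) \<inter> {w. log_crit (hcoeff (fst w)) (fst (snd w)) (snd (snd w))})"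
    using \<open>0 < tlo\<close> by (intro closed_log_crit_hcoeff) (auto simp: T_def closed_Times)
  ultimately have "continuous_on {0..1} p"
    using pT by (intro continuous_from_closed_graph[of T]) (auto simp: T_def intro!: compact_Times)
  with p p_unique show ?thesis
    using that by blast
qed

lemma critical_path:
  obtains p where "continuous_on {0..1} p"
    and "\<And>s. s \<in> {0..1} \<Longrightarrow> 0 < fst (p s) \<and> (\<forall>i. 0 < snd (p s) $ i) \<and>
           crit_sys Ap Am (star_pow (hcoeff s) (fst (p s)) h) (snd (p s)) = 0"
    and "\<And>s t x. s \<in> {0..1} \<Longrightarrow> 0 < t \<Longrightarrow> (\<forall>i. 0 < x $ i) \<Longrightarrow>
           crit_sys Ap Am (star_pow (hcoeff s) t h) x = 0 \<Longrightarrow> (t, x) = p s"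
proof -
  obtain q where q_cont: "continuous_on {0..1} q"
    and q: "\<And>s. s \<in> {0..1} \<Longrightarrow> log_crit (hcoeff s) (fst (q s)) (snd (q s))"
    and q_unique: "\<And>s t y. s \<in> {0..1} \<Longrightarrow> log_crit (hcoeff s) t y \<Longrightarrow> (t, y) = q s"
    using log_crit_path by blast
  define p where "p s = (fst (q s), vexp (snd (q s)))" for s
  have "continuous_on {0..1} p"
    unfolding p_def
    by (intro continuous_on_Pair continuous_on_fst q_cont
        continuous_on_compose2[OF continuous_on_vexp continuous_on_snd[OF q_cont]]) auto
  moreover have "0 < fst (p s) \<and> (\<forall>i. 0 < snd (p s) $ i) \<and>
      crit_sys Ap Am (star_pow (hcoeff s) (fst (p s)) h) (snd (p s)) = 0" if "s \<in> {0..1}" for s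
    using q[OF that] by (simp add: p_def log_crit_def crit_sys_vexp_eq_0_iff)
  moreover have "(t, x) = p s"
    if "s \<in> {0..1}" "0 < t" "\<forall>i. 0 < x $ i" "crit_sys Ap Am (star_pow (hcoeff s) t h) x = 0"
    for s t x
  proof -
    have "log_crit (hcoeff s) t (vln x)"
      using that crit_sys_vexp_eq_0_iff[of t "hcoeff s" "vln x"] by (simp add: vexp_vln)
    then have "q s = (t, vln x)"
      using q_unique[OF that(1)] by simp
    moreover have "vexp (vln x) = x"
      using that(3) by (simp add: vexp_vln)
    ultimately show ?thesis
      by (simp add: p_def)
  qed
  ultimately show ?thesis
    using that by blast
qed

end

lemma critical_levels_eq_singleton:
  assumes unique: "\<And>t x. 0 < t \<Longrightarrow> (\<forall>i. 0 < x $ i) \<Longrightarrow> crit_sys Ap Am (star_pow C t h) x = 0 \<Longrightarrow> (t, x) = z"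
    and "0 < fst z" "\<forall>i. 0 < snd z $ i" "crit_sys Ap Am (star_pow C (fst z) h) (snd z) = 0"
  shows "{t. 0 < t \<and> (\<exists>x. (\<forall>i. 0 < x $ i) \<and> crit_sys Ap Am (star_pow C t h) x = 0)} = {fst z}"
proof (intro equalityI subsetI)
  fix t assume "t \<in> {t. 0 < t \<and> (\<exists>x. (\<forall>i. 0 < x $ i) \<and> crit_sys Ap Am (star_pow C t h) x = 0)}"
  then obtain x where "0 < t" "\<forall>i. 0 < x $ i" "crit_sys Ap Am (star_pow C t h) x = 0"
    by blast
  then show "t \<in> {fst z}"
    using unique by fastforce
qed (use assms(2-4) in blast)

theorem theorem4p5:
  fixes Ap Am :: "(int ^ 'n) set"
    and h :: "int ^ 'n \<Rightarrow> int"
    and c lam :: "int ^ 'n \<Rightarrow> real"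
    and b1 :: "int ^ 'n"
  assumes "finite Ap" "finite Am" "Ap \<noteq> {}" "Am \<noteq> {}" "Ap \<inter> Am = {}"
    and "full_dimensional (Ap \<union> Am)"
    and "nonseparable Ap Am"
    and "lifts Ap Am h"
    and "\<forall>a\<in>Ap \<union> Am. c a > 0"
    and "b1 \<in> Am"
    and "\<forall>a\<in>Ap. lam a > 0" "(\<Sum>a\<in>Ap. lam a) = 1"
    and "(\<Sum>a\<in>Ap. lam a *\<^sub>R rv a) = rv b1"
  defines "H \<equiv> (\<lambda>s (t, x). crit_sys Ap Am (star_pow (\<lambda>a. s * c a + (1 - s) * (if a \<in> Ap then lam a else if a = b1 then 1 else 0)) t h) x)"
    and "S \<equiv> {t::real. t > 0 \<and> (\<exists>x::real ^ 'n. (\<forall>i. x $ i > 0) \<and> crit_sys Ap Am (star_pow c t h) x = 0)}"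
  shows "H 0 (1, \<chi> i. 1) = 0 \<and>
    (\<exists>p :: real \<Rightarrow> real \<times> (real ^ 'n).
       (continuous_on {0..1} p \<and> (\<forall>s\<in>{0..1}. fst (p s) > 0 \<and> (\<forall>i. snd (p s) $ i > 0)) \<and>
        p 0 = (1, \<chi> i. 1) \<and> (\<forall>s\<in>{0..1}. H s (p s) = 0)) \<and>
       (\<forall>q :: real \<Rightarrow> real \<times> (real ^ 'n).
          (continuous_on {0..1} q \<and> (\<forall>s\<in>{0..1}. fst (q s) > 0 \<and> (\<forall>i. snd (q s) $ i > 0)) \<and>
           q 0 = (1, \<chi> i. 1) \<and> (\<forall>s\<in>{0..1}. H s (q s) = 0)) \<longrightarrow> (\<forall>s\<in>{0..1}. q s = p s)) \<and>
       S = {fst (p 1)})"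
proof -
  interpret coefficient_homotopy Ap Am h lam b1 c
    using assms(1-13) by unfold_locales auto
  have H: "H s z = crit_sys Ap Am (star_pow (hcoeff s) (fst z) h) (snd z)" for s z
    by (simp add: H_def hcoeff_def[abs_def] c_hat_def split_beta)
  obtain p where cont: "continuous_on {0..1} p"
    and on_path: "\<And>s. s \<in> {0..1} \<Longrightarrow> 0 < fst (p s) \<and> (\<forall>i. 0 < snd (p s) $ i) \<and>
      crit_sys Ap Am (star_pow (hcoeff s) (fst (p s)) h) (snd (p s)) = 0"
    and unique: "\<And>s t x. s \<in> {0..1} \<Longrightarrow> 0 < t \<Longrightarrow> (\<forall>i. 0 < x $ i) \<Longrightarrow>
      crit_sys Ap Am (star_pow (hcoeff s) t h) x = 0 \<Longrightarrow> (t, x) = p s"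
    using critical_path by blast
  have "p 0 = (1, \<chi> i. 1)"
    using unique[of 0 1 "\<chi> i. 1"] log_crit_hcoeff_0 crit_sys_vexp_eq_0_iff[of 1 "hcoeff 0" 0] by simp
  moreover have "S = {fst (p 1)}"
    unfolding S_def
    by (rule critical_levels_eq_singleton) (use on_path[of 1] unique[of 1] in \<open>simp_all add: hcoeff_1\<close>)
  moreover have q_eq: "q s = p s"
    if "\<forall>s\<in>{0..1}. fst (q s) > 0 \<and> (\<forall>i. snd (q s) $ i > 0)" "\<forall>s\<in>{0..1}. H s (q s) = 0" "s \<in> {0..1}"
    for q s
    using that unique[of s "fst (q s)" "snd (q s)"] by (simp add: H)
  ultimately show ?thesis
    using cont on_path on_path[of 0] by (intro conjI exI[of _ p]) (auto simp: H intro: q_eq)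
qed

end
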